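(* Let $K\ge 0$ be an integer and, for $k=0,1,\dots,K$, let $w_k=2^{k-K}$ and let $\mathcal{G}^k$ be a finite subset of the lattice $w_k\mathbb{Z}^3$, with a real coefficient $\lambda_{\boldsymbol{g}}$ attached to each $\boldsymbol{g}\in\mathcal{G}^k$ (points of different levels $k$ are treated as distinct even if they coincide in position). Define $f:\mathbb{R}^3\to\mathbb{R}$ by $$f(\boldsymbol{v})=\sum_{k=0}^K\sum_{\boldsymbol{g}\in\mathcal{G}^k}\lambda_{\boldsymbol{g}}\,\boldsymbol{B}\!\left(\frac{\boldsymbol{v}-\boldsymbol{g}}{w_k}\right),\qquad \boldsymbol{B}(x,y,z)=B(x)B(y)B(z),$$ where $B(t)=1+t$ for $t\in[-1,0]$, $B(t)=1-t$ for $t\in(0,1]$, and $B(t)=0$ otherwise. Let $\mathcal{M}\subset\mathbb{R}^3$ be a polygonal mesh surface, i.e. the union of finitely many non-degenerate triangles. Subdivide each triangle of $\mathcal{M}$ into finitely many non-degenerate sub-triangles, each of which is contained in a single depth-0 cell (a closed cube of the form $\prod_{i=1}^3[w_0a_i,w_0(a_i+1)]$ with $a_i\in\mathbb{Z}$). For each such sub-triangle $T$ with vertices $\boldsymbol{v}_1,\boldsymbol{v}_2,\boldsymbol{v}_3$, let $H_T(\alpha,\beta)=f\big(\boldsymbol{v}_1+\alpha(\boldsymbol{v}_2-\boldsymbol{v}_1)+\beta(\boldsymbol{v}_3-\boldsymbol{v}_1)\big)$ on $D=\{(\alpha,\beta):\alpha,\beta\ge0,\ \alpha+\beta\le1\}$,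 and let the candidate set $\boldsymbol{C}_T\subset T$ consist of: (1) the points of $T$ corresponding to $(\alpha,\beta)\in D$ with $\nabla_{(\alpha,\beta)}H_T(\alpha,\beta)=\boldsymbol{0}$; (2) the points on the three edges of $T$ at which the derivative of the restriction of $H_T$ to that edge (i.e. of the univariate function $\hat H_T(t)$ obtained by imposing $\alpha=0$, $\beta=0$, or $\alpha+\beta=1$) vanishes; and (3) the three vertices of $T$. Let $\mathcal{C}$ be the union of the sets $\boldsymbol{C}_T$ over all sub-triangles $T$, and set $$\epsilon_1=\min_{\boldsymbol{v}\in\mathcal{C}}f(\boldsymbol{v}),\qquad \epsilon_2=\max_{\boldsymbol{v}\in\mathcal{C}}f(\boldsymbol{v}).$$ Then the thin-shell space $\{\boldsymbol{x}\in\mathbb{R}^3:\epsilon_1\le f(\boldsymbol{x})\le\epsilon_2\}$ rigorously wraps $\mathcal{M}$, i.e. $\epsilon_1\le f(\boldsymbol{v})\le\epsilon_2$ for every $\boldsymbol{v}\in\mathcal{M}$.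
   Context: In the paper, $f$ is a first-degree tri-variate tensor-product B-spline defined on the grid points of a sparse voxel octree of height $K$ over the model (depth $0$ is the finest level, with cell width $2^{-K}$ for a model normalized to the unit box; depth $k$ has cell width $w_k$); its coefficients are obtained by fitting the signed distance function of $\mathcal{M}$ at the grid points, but the conclusion concerns only the function $f$ of the stated form. The "thin shell" of $\mathcal{M}$ is the region between the level sets $f=\epsilon_1$ and $f=\epsilon_2$. *)

theory Defs
  imports "HOL-Analysis.Analysis"
begin

type_synonym pt = "real^3"
type_synonym tri = "pt \<times> pt \<times> pt"

definition hatB :: "real \<Rightarrow> real" where
  "hatB t = (if -1 \<le> t \<and> t \<le> 0 then 1 + t else if 0 < t \<and> t \<le> 1 then 1 - t else 0)"

definition triB :: "pt \<Rightarrow> real" where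
  "triB x = hatB (x$1) * hatB (x$2) * hatB (x$3)"

definition cellw :: "nat \<Rightarrow> nat \<Rightarrow> real" where
  "cellw K k = 2 powr (real k - real K)"

definition on_lattice :: "real \<Rightarrow> pt \<Rightarrow> bool" where
  "on_lattice w g = (\<forall>i. \<exists>a::int. g$i = w * of_int a)"

text \<open>The function f; coefficients are indexed by level and grid point,
  so points of different levels are distinct.\<close>
definition spline :: "nat \<Rightarrow> (nat \<Rightarrow> pt set) \<Rightarrow> (nat \<Rightarrow> pt \<Rightarrow> real) \<Rightarrow> pt \<Rightarrow> real" where
  "spline K G lam v = (\<Sum>k\<le>K. \<Sum>g\<in>G k. lam k g * triB ((1 / cellw K k) *\<^sub>R (v - g)))"

definition cell0 :: "nat \<Rightarrow> int^3 \<Rightarrow> pt set" where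
  "cell0 K a = {x. \<forall>i. cellw K 0 * of_int (a$i) \<le> x$i \<and> x$i \<le> cellw K 0 * (of_int (a$i) + 1)}"

definition triangle :: "tri \<Rightarrow> pt set" where
  "triangle T = (case T of (v1, v2, v3) \<Rightarrow> convex hull {v1, v2, v3})"

definition nondegenerate :: "tri \<Rightarrow> bool" where
  "nondegenerate T = (case T of (v1, v2, v3) \<Rightarrow> \<not> collinear {v1, v2, v3})"

definition tri_param :: "tri \<Rightarrow> real \<Rightarrow> real \<Rightarrow> pt" where
  "tri_param T \<alpha> \<beta> = (case T of (v1, v2, v3) \<Rightarrow> v1 + \<alpha> *\<^sub>R (v2 - v1) + \<beta> *\<^sub>R (v3 - v1))"

definition paramD :: "(real \<times> real) set" where
  "paramD = {(\<alpha>, \<beta>). 0 \<le> \<alpha> \<and> 0 \<le> \<beta> \<and> \<alpha> + \<beta> \<le> 1}"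

text \<open>Candidate set C_T for a sub-triangle T, for the function f.
  H_T(alpha,beta) = f (tri_param T alpha beta). Gradient / derivative are taken
  within the (closed) parameter domain.\<close>
definition candidates :: "(pt \<Rightarrow> real) \<Rightarrow> tri \<Rightarrow> pt set" where
  "candidates f T =
     {tri_param T \<alpha> \<beta> | \<alpha> \<beta>. (\<alpha>, \<beta>) \<in> paramD \<and>
        ((\<lambda>p. f (tri_param T (fst p) (snd p))) has_derivative (\<lambda>_. 0)) (at (\<alpha>, \<beta>) within paramD)}
   \<union> {tri_param T 0 t | t. t \<in> {0..1} \<and>
        ((\<lambda>s. f (tri_param T 0 s)) has_real_derivative 0) (at t within {0..1})}
   \<union> {tri_param T t 0 | t. t \<in> {0..1} \<and>
        ((\<lambda>s. f (tri_param T s 0)) has_real_derivative 0) (at t within {0..1})}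
   \<union> {tri_param T t (1 - t) | t. t \<in> {0..1} \<and>
        ((\<lambda>s. f (tri_param T s (1 - s))) has_real_derivative 0) (at t within {0..1})}
   \<union> (case T of (v1, v2, v3) \<Rightarrow> {v1, v2, v3})"

end

theory Submission
  imports Defs
begin

(* Since w_k = 2^k w_0, every knot of a level-k hat factor lies on the depth-0 grid, so on a
   depth-0 cell each factor is affine and f coincides with a polynomial F. On a sub-triangle S
   the pull-back of F to the compact parameter domain D is continuous and attains its maximum
   and minimum; Fermat's rule in the interior of D, in the interior of an edge, or trivially at
   a vertex places every such extremal point in C_S. The bound |f| <= sum |lambda| keeps INF and
   SUP over the possibly infinite set C meaningful. *)

lemma hatB_eq_0: "t \<le> -1 \<or> 1 \<le> t \<Longrightarrow> hatB t = 0"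
  by (auto simp: hatB_def)

lemma hatB_eq_interpolation:
  assumes "of_int n \<le> t" "t \<le> of_int n + 1"
  shows "hatB t = hatB (of_int n) + (hatB (of_int n + 1) - hatB (of_int n)) * (t - of_int n)"
proof -
  consider "n \<le> -2" | "n = -1" | "n = 0" | "n \<ge> 1" by linarith
  then show ?thesis
  proof cases
    case 1
    then have "of_int n + 1 \<le> (-1::real)" by simp
    then show ?thesis using assms by (simp add: hatB_eq_0)
  next
    case 4
    then have "(1::real) \<le> of_int n" by simp
    then show ?thesis using assms by (simp add: hatB_eq_0)
  qed (use assms in \<open>auto simp: hatB_def\<close>)
qed

lemma of_int_succ_divide_le_floor_add_one:
  assumes "0 < m"
  shows "(of_int a + 1) / of_int m \<le> of_int \<lfloor>of_int a / (of_int m :: real)\<rfloor> + (1::real)"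
proof -
  have "a + 1 \<le> m * (a div m) + m"
    using assms mult_div_mod_eq[of m a] pos_mod_bound[of m a] by linarith
  then have "a + 1 \<le> m * (a div m + 1)"
    by (simp add: distrib_left)
  then have "of_int a + 1 \<le> of_int m * (of_int (a div m) + (1::real))"
    by (metis of_int_1 of_int_add of_int_le_iff of_int_mult)
  then show ?thesis
    using assms by (simp add: floor_divide_of_int_eq divide_le_eq mult.commute)
qed

lemma grid_cell_in_unit_interval:
  fixes a b m :: int and w0 x :: real
  assumes "0 < w0" "0 < m" "w0 * of_int a \<le> x" "x \<le> w0 * (of_int a + 1)"
  defines "w \<equiv> w0 * of_int m"
  defines "n \<equiv> \<lfloor>(w0 * of_int a - w * of_int b) / w\<rfloor>"
  shows "of_int n \<le> (x - w * of_int b) / w" "(x - w * of_int b) / w \<le> of_int n + 1"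
proof -
  have w: "0 < w" using assms by (simp add: w_def)
  have "(w0 * of_int a - w * of_int b) / w = of_int a / of_int m - of_int b"
    using assms(1,2) by (simp add: w_def field_simps)
  then have n: "n = \<lfloor>of_int a / (of_int m :: real)\<rfloor> - b"
    by (simp add: n_def)
  have "of_int n \<le> (w0 * of_int a - w * of_int b) / w"
    unfolding n_def by (rule of_int_floor_le)
  also have "\<dots> \<le> (x - w * of_int b) / w"
    using w assms(3) by (simp add: divide_right_mono)
  finally show "of_int n \<le> (x - w * of_int b) / w" .
  have "(x - w * of_int b) / w \<le> (w0 * (of_int a + 1) - w * of_int b) / w"
    using w assms(4) by (simp add: divide_right_mono)
  also have "\<dots> = (of_int a + 1) / of_int m - of_int b"
    using assms(1,2) by (simp add: w_def field_simps)
  also have "\<dots> \<le> of_int n + 1"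
    using of_int_succ_divide_le_floor_add_one[OF assms(2), of a] by (simp add: n)
  finally show "(x - w * of_int b) / w \<le> of_int n + 1" .
qed

lemma cellw_pos: "0 < cellw K k"
  by (simp add: cellw_def)

lemma cellw_eq_cellw0_mult: "cellw K k = cellw K 0 * 2 ^ k"
  by (simp add: cellw_def powr_realpow[symmetric] powr_add[symmetric])

lemma cell0_coord_in_unit_interval:
  fixes i :: 3
  assumes "x \<in> cell0 K a" "on_lattice (cellw K k) g"
  defines "n \<equiv> \<lfloor>(cellw K 0 * of_int (a$i) - g$i) / cellw K k\<rfloor>"
  shows "of_int n \<le> (x$i - g$i) / cellw K k" "(x$i - g$i) / cellw K k \<le> of_int n + 1"
proof -
  obtain b where g: "g$i = cellw K k * of_int b"
    using assms(2) by (auto simp: on_lattice_def)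
  have w: "cellw K k = cellw K 0 * of_int (2 ^ k :: int)"
    by (simp add: cellw_eq_cellw0_mult[of K k])
  have x: "cellw K 0 * of_int (a$i) \<le> x$i" "x$i \<le> cellw K 0 * (of_int (a$i) + 1)"
    using assms(1) by (auto simp: cell0_def)
  show "of_int n \<le> (x$i - g$i) / cellw K k" "(x$i - g$i) / cellw K k \<le> of_int n + 1"
    using grid_cell_in_unit_interval[OF cellw_pos _ x, of "2 ^ k" b]
    unfolding n_def g w by auto
qed

lemma spline_eq_differentiable_on_cell0:
  assumes "\<forall>k\<le>K. \<forall>g\<in>G k. on_lattice (cellw K k) g"
  obtains F where "\<And>x. F differentiable (at x)"
    and "\<And>x. x \<in> cell0 K a \<Longrightarrow> spline K G lam x = F x"
proof
  define piece where "piece k g i x =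
    (let n = \<lfloor>(cellw K 0 * of_int (a$i) - g$i) / cellw K k\<rfloor>; t = (x$i - g$i) / cellw K k
     in hatB (of_int n) + (hatB (of_int n + 1) - hatB (of_int n)) * (t - of_int n))"
    for k g i and x :: pt
  define F where "F x = (\<Sum>k\<le>K. \<Sum>g\<in>G k. lam k g * (piece k g 1 x * piece k g 2 x * piece k g 3 x))"
    for x
  have coord: "(\<lambda>x::pt. x$i) differentiable (at x)" for i x
    by (simp add: bounded_linear_imp_differentiable bounded_linear_vec_nth)
  have "(\<lambda>x. \<Sum>g\<in>G k. lam k g * (piece k g 1 x * piece k g 2 x * piece k g 3 x))
          differentiable (at x)" for k x
    using cellw_pos[of K k] by (cases "finite (G k)")
      (auto simp: piece_def Let_def intro!: derivative_intros coord)
  then show "F differentiable (at x)" for x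
    unfolding F_def by (intro differentiable_sum) auto
  fix x assume x: "x \<in> cell0 K a"
  have "hatB (((1 / cellw K k) *\<^sub>R (x - g))$i) = piece k g i x" if "k \<le> K" "g \<in> G k" for k g i
    using that assms hatB_eq_interpolation cell0_coord_in_unit_interval[OF x]
    by (simp add: piece_def Let_def)
  then show "spline K G lam x = F x"
    unfolding spline_def F_def triB_def by (auto intro!: sum.cong)
qed

lemma triangle_eq_tri_param_image:
  "triangle T = (\<lambda>p. tri_param T (fst p) (snd p)) ` paramD"
proof -
  obtain v1 v2 v3 where T: "T = (v1, v2, v3)" by (cases T)
  have param: "tri_param T \<alpha> \<beta> = (1 - \<alpha> - \<beta>) *\<^sub>R v1 + \<alpha> *\<^sub>R v2 + \<beta> *\<^sub>R v3" for \<alpha> \<beta>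
    by (simp add: T tri_param_def algebra_simps)
  show ?thesis
  proof (intro set_eqI iffI)
    fix v assume "v \<in> triangle T"
    then obtain u \<alpha> \<beta> where "0 \<le> u" "0 \<le> \<alpha>" "0 \<le> \<beta>" "u + \<alpha> + \<beta> = 1"
        "v = u *\<^sub>R v1 + \<alpha> *\<^sub>R v2 + \<beta> *\<^sub>R v3"
      by (auto simp: triangle_def T convex_hull_3)
    then have "(\<alpha>, \<beta>) \<in> paramD" "v = tri_param T \<alpha> \<beta>"
      by (auto simp: paramD_def param eq_diff_eq[symmetric])
    then show "v \<in> (\<lambda>p. tri_param T (fst p) (snd p)) ` paramD"
      by force
  next
    fix v assume "v \<in> (\<lambda>p. tri_param T (fst p) (snd p)) ` paramD"
    then obtain \<alpha> \<beta> where "0 \<le> \<alpha>" "0 \<le> \<beta>" "\<alpha> + \<beta> \<le> 1" "v = tri_param T \<alpha> \<beta>"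
      by (auto simp: paramD_def)
    then have "v = (1 - \<alpha> - \<beta>) *\<^sub>R v1 + \<alpha> *\<^sub>R v2 + \<beta> *\<^sub>R v3"
      "0 \<le> 1 - \<alpha> - \<beta>" "0 \<le> \<alpha>" "0 \<le> \<beta>"
      by (simp_all add: param)
    then show "v \<in> triangle T"
      unfolding triangle_def T prod.case convex_hull_3
      by (intro CollectI exI[of _ "1 - \<alpha> - \<beta>"] exI[of _ \<alpha>] exI[of _ \<beta>]) auto
  qed
qed

lemma compact_paramD: "compact paramD"
proof -
  have D: "paramD = ({0..1} \<times> {0..1}) \<inter> {p. fst p + snd p \<le> 1}"
    by (auto simp: paramD_def)
  have "closed {p::real \<times> real. fst p + snd p \<le> 1}"
    by (intro closed_Collect_le continuous_intros)
  then show ?thesis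
    unfolding D by (intro compact_Int_closed compact_Times compact_Icc)
qed

lemma differentiable_tri_param_compose:
  assumes "\<And>x. F differentiable (at x)" "\<alpha> differentiable (at q)" "\<beta> differentiable (at q)"
  shows "(\<lambda>p. F (tri_param T (\<alpha> p) (\<beta> p))) differentiable (at q)"
proof -
  obtain v1 v2 v3 where T: "T = (v1, v2, v3)" by (cases T)
  have "(\<lambda>p. v1 + \<alpha> p *\<^sub>R (v2 - v1) + \<beta> p *\<^sub>R (v3 - v1)) differentiable (at q)"
    using assms(2,3) by (intro derivative_intros)
  from differentiable_chain_at[OF this assms(1)] show ?thesis
    by (simp add: T tri_param_def o_def)
qed

lemma differentiable_tri_param_pair:
  assumes "\<And>x. F differentiable (at x)"
  shows "(\<lambda>p. F (tri_param T (fst p) (snd p))) differentiable (at q)"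
  by (rule differentiable_tri_param_compose[OF assms])
    (simp_all add: bounded_linear_imp_differentiable bounded_linear_fst bounded_linear_snd)

definition extremum_on :: "'a set \<Rightarrow> ('a \<Rightarrow> real) \<Rightarrow> 'a \<Rightarrow> bool" where
  "extremum_on S h p \<longleftrightarrow> (\<forall>q\<in>S. h q \<le> h p) \<or> (\<forall>q\<in>S. h p \<le> h q)"

lemma extremum_on_subset: "extremum_on S h p \<Longrightarrow> S' \<subseteq> S \<Longrightarrow> extremum_on S' h p"
  by (auto simp: extremum_on_def)

lemma extremum_on_compose:
  "extremum_on S h (\<gamma> t) \<Longrightarrow> \<gamma> ` A \<subseteq> S \<Longrightarrow> extremum_on A (h \<circ> \<gamma>) t"
  by (auto simp: extremum_on_def)

lemma has_derivative_zero_at_extremum_within: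
  fixes g h :: "'a::real_normed_vector \<Rightarrow> real"
  assumes ext: "extremum_on S h p" and p: "p \<in> interior S"
    and g: "g differentiable (at p)" and eq: "\<And>q. q \<in> S \<Longrightarrow> h q = g q"
  shows "(h has_derivative (\<lambda>_. 0)) (at p within S)"
proof -
  obtain D where D: "(g has_derivative D) (at p)"
    using g by (auto simp: differentiable_def)
  have "p \<in> S" using p interior_subset by blast
  have "g q = h q" if "q \<in> interior S" for q
    using eq that interior_subset by (metis subsetD)
  then have "extremum_on (interior S) g p"
    using extremum_on_subset[OF ext interior_subset] p by (simp add: extremum_on_def)
  then have "D = (\<lambda>_. 0)"
    using differential_zero_maxmin[OF p open_interior D] by (simp add: extremum_on_def)
  with D have "(g has_derivative (\<lambda>_. 0)) (at p within S)"
    by (auto intro: has_derivative_at_withinI)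
  then show ?thesis
    using has_derivative_transform[OF \<open>p \<in> S\<close>] eq by metis
qed

lemma extremum_in_candidates:
  fixes f F :: "pt \<Rightarrow> real"
  assumes F: "\<And>x. F differentiable (at x)" and eq: "\<And>x. x \<in> triangle T \<Longrightarrow> f x = F x"
    and p: "(a, b) \<in> paramD"
    and ext: "extremum_on paramD (\<lambda>q. f (tri_param T (fst q) (snd q))) (a, b)"
  shows "tri_param T a b \<in> candidates f T"
proof -
  have eqD: "f (tri_param T \<alpha> \<beta>) = F (tri_param T \<alpha> \<beta>)" if "(\<alpha>, \<beta>) \<in> paramD" for \<alpha> \<beta>
    using eq that by (force simp: triangle_eq_tri_param_image)
  have edge: "((\<lambda>s. f (tri_param T (\<alpha> s) (\<beta> s))) has_real_derivative 0) (at t within {0..1})"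
    if on_edge: "\<And>s. s \<in> {0..1} \<Longrightarrow> (\<alpha> s, \<beta> s) \<in> paramD"
      and "\<alpha> t = a" "\<beta> t = b" "0 < t" "t < 1"
      and "\<And>s. \<alpha> differentiable (at s)" "\<And>s. \<beta> differentiable (at s)" for \<alpha> \<beta> t
  proof -
    have "extremum_on {0..1} ((\<lambda>q. f (tri_param T (fst q) (snd q))) \<circ> (\<lambda>s. (\<alpha> s, \<beta> s))) t"
      by (rule extremum_on_compose) (use ext on_edge that in auto)
    then have "((\<lambda>s. f (tri_param T (\<alpha> s) (\<beta> s))) has_derivative (\<lambda>_. 0)) (at t within {0..1})"
      using that
      by (intro has_derivative_zero_at_extremum_within
          [where g = "\<lambda>s. F (tri_param T (\<alpha> s) (\<beta> s))"])
        (auto simp: o_def eqD intro: differentiable_tri_param_compose[OF F])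
    moreover have "(*) (0::real) = (\<lambda>_. 0)" by auto
    ultimately show ?thesis by (simp add: has_field_derivative_def)
  qed
  obtain v1 v2 v3 where T: "T = (v1, v2, v3)" by (cases T)
  have "0 \<le> a" "0 \<le> b" "a + b \<le> 1"
    using p by (auto simp: paramD_def)
  then consider (interior) "0 < a" "0 < b" "a + b < 1" | (edge1) "a = 0" "0 < b" "b < 1"
    | (edge2) "b = 0" "0 < a" "a < 1" | (edge3) "a + b = 1" "0 < a" "a < 1"
    | (vertex1) "a = 0" "b = 0" | (vertex2) "a = 1" "b = 0" | (vertex3) "a = 0" "b = 1"
    by linarith
  then show ?thesis
  proof cases
    case interior
    let ?U = "{q :: real \<times> real. 0 < fst q \<and> 0 < snd q \<and> fst q + snd q < 1}"
    have "open ?U"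
      by (intro open_Collect_conj open_Collect_less continuous_intros)
    moreover have "?U \<subseteq> paramD" by (auto simp: paramD_def)
    ultimately have "(a, b) \<in> interior paramD"
      using interior by (auto intro: interiorI)
    then have "((\<lambda>q. f (tri_param T (fst q) (snd q))) has_derivative (\<lambda>_. 0)) (at (a, b) within paramD)"
      by (intro has_derivative_zero_at_extremum_within[OF ext,
            where g = "\<lambda>q. F (tri_param T (fst q) (snd q))"])
        (auto simp: eqD intro: differentiable_tri_param_pair[OF F])
    then show ?thesis using p by (auto simp: candidates_def)
  next
    case edge1
    then have "((\<lambda>s. f (tri_param T 0 s)) has_real_derivative 0) (at b within {0..1})"
      by (intro edge[of "\<lambda>_. 0" "\<lambda>s. s"]) (auto simp: paramD_def)
    then show ?thesis using edge1 by (auto simp: candidates_def)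
  next
    case edge2
    then have "((\<lambda>s. f (tri_param T s 0)) has_real_derivative 0) (at a within {0..1})"
      by (intro edge[of "\<lambda>s. s" "\<lambda>_. 0"]) (auto simp: paramD_def)
    then show ?thesis using edge2 by (auto simp: candidates_def)
  next
    case edge3
    then have "((\<lambda>s. f (tri_param T s (1 - s))) has_real_derivative 0) (at a within {0..1})"
      by (intro edge[of "\<lambda>s. s" "\<lambda>s. 1 - s"]) (auto simp: paramD_def intro: derivative_intros)
    then show ?thesis using edge3 by (auto simp: candidates_def eq_diff_eq[symmetric])
  qed (auto simp: candidates_def T tri_param_def)
qed

lemma candidates_bound_on_triangle:
  fixes f F :: "pt \<Rightarrow> real"
  assumes F: "\<And>x. F differentiable (at x)" and eq: "\<And>x. x \<in> triangle T \<Longrightarrow> f x = F x"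
    and v: "v \<in> triangle T"
  obtains c c' where "c \<in> candidates f T" "f c \<le> f v" "c' \<in> candidates f T" "f v \<le> f c'"
proof -
  let ?H = "\<lambda>q. f (tri_param T (fst q) (snd q))"
  have in_T: "tri_param T (fst q) (snd q) \<in> triangle T" if "q \<in> paramD" for q
    using that by (simp add: triangle_eq_tri_param_image)
  have "continuous_on paramD (\<lambda>q. F (tri_param T (fst q) (snd q)))"
    by (intro continuous_at_imp_continuous_on ballI differentiable_imp_continuous_within
        differentiable_tri_param_pair[OF F])
  then have cont: "continuous_on paramD ?H"
    by (rule continuous_on_cong[THEN iffD1, rotated 2]) (simp_all add: eq in_T)
  obtain q where q: "q \<in> paramD" "v = tri_param T (fst q) (snd q)"
    using v by (auto simp: triangle_eq_tri_param_image)
  then have ne: "paramD \<noteq> {}" by blast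
  obtain r where r: "r \<in> paramD" "\<forall>q\<in>paramD. ?H r \<le> ?H q"
    using continuous_attains_inf[OF compact_paramD ne cont] by blast
  obtain r' where r': "r' \<in> paramD" "\<forall>q\<in>paramD. ?H q \<le> ?H r'"
    using continuous_attains_sup[OF compact_paramD ne cont] by blast
  show ?thesis
  proof
    show "tri_param T (fst r) (snd r) \<in> candidates f T"
      using r by (intro extremum_in_candidates[OF F eq]) (auto simp: extremum_on_def)
    show "tri_param T (fst r') (snd r') \<in> candidates f T"
      using r' by (intro extremum_in_candidates[OF F eq]) (auto simp: extremum_on_def)
    show "f (tri_param T (fst r) (snd r)) \<le> f v" "f v \<le> f (tri_param T (fst r') (snd r'))"
      using q r r' by auto
  qed
qed

lemma abs_spline_le: "\<bar>spline K G lam v\<bar> \<le> (\<Sum>k\<le>K. \<Sum>g\<in>G k. \<bar>lam k g\<bar>)"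
proof -
  have "\<bar>triB x\<bar> \<le> 1" for x
    by (auto simp: triB_def hatB_def abs_mult intro!: mult_le_one)
  then have "\<bar>lam k g * triB x\<bar> \<le> \<bar>lam k g\<bar>" for k g x
    by (simp add: abs_mult mult_left_le)
  then show ?thesis
    unfolding spline_def
    by (intro order.trans[OF sum_abs] sum_mono order.trans[OF sum_abs]) auto
qed

lemma bdd_spline_image:
  "bdd_above (spline K G lam ` A)" "bdd_below (spline K G lam ` A)"
proof -
  let ?B = "\<Sum>k\<le>K. \<Sum>g\<in>G k. \<bar>lam k g\<bar>"
  have bound: "spline K G lam x \<le> ?B" "- ?B \<le> spline K G lam x" for x
    using abs_spline_le[of K G lam x] by linarith+
  show "bdd_above (spline K G lam ` A)"
    by (rule bdd_aboveI2) (rule bound(1))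
  show "bdd_below (spline K G lam ` A)"
    by (rule bdd_belowI2) (rule bound(2))
qed

theorem theorem1:
  fixes K :: nat
    and G :: "nat \<Rightarrow> pt set"
    and lam :: "nat \<Rightarrow> pt \<Rightarrow> real"
    and Tris :: "tri set"
    and Sub :: "tri \<Rightarrow> tri set"
    and M C :: "pt set"
  assumes "\<forall>k\<le>K. finite (G k) \<and> (\<forall>g\<in>G k. on_lattice (cellw K k) g)"
    and "finite Tris"
    and "\<forall>T\<in>Tris. nondegenerate T"
    and "M = (\<Union>T\<in>Tris. triangle T)"
    and "\<forall>T\<in>Tris. finite (Sub T) \<and> (\<Union>S\<in>Sub T. triangle S) = triangle T \<and>
           (\<forall>S\<in>Sub T. nondegenerate S \<and> (\<exists>a. triangle S \<subseteq> cell0 K a))"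
    and "C = (\<Union>T\<in>Tris. \<Union>S\<in>Sub T. candidates (spline K G lam) S)"
  shows "\<forall>v\<in>M. (INF c\<in>C. spline K G lam c) \<le> spline K G lam v \<and>
                spline K G lam v \<le> (SUP c\<in>C. spline K G lam c)"
proof
  fix v assume "v \<in> M"
  then obtain T S a where TS: "T \<in> Tris" "S \<in> Sub T" "v \<in> triangle S"
    and cell: "triangle S \<subseteq> cell0 K a"
    using assms(4,5) by blast
  obtain F where F: "\<And>x. F differentiable (at x)"
    and eq: "\<And>x. x \<in> cell0 K a \<Longrightarrow> spline K G lam x = F x"
    using spline_eq_differentiable_on_cell0 assms(1) by metis
  obtain c c' where "c \<in> candidates (spline K G lam) S" "spline K G lam c \<le> spline K G lam v"
    and "c' \<in> candidates (spline K G lam) S" "spline K G lam v \<le> spline K G lam c'"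
    using candidates_bound_on_triangle[OF F _ TS(3)] eq cell by blast
  moreover have "candidates (spline K G lam) S \<subseteq> C"
    using assms(6) TS by blast
  ultimately show "(INF c\<in>C. spline K G lam c) \<le> spline K G lam v \<and>
                spline K G lam v \<le> (SUP c\<in>C. spline K G lam c)"
    using cINF_lower[OF bdd_spline_image(2)] cSUP_upper[OF _ bdd_spline_image(1)]
    by (meson order.trans subsetD)
qed

end
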